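(* Let $0<\beta_2,\beta_3<1$ with $\gamma=\beta_2+\beta_3-1>0$, let $a_2\ne a_3$ be complex numbers, and for $\mu\in\mathbf{C}$ with $0<|\mu|<1$ let $$\omega_{F,\mu}=\gamma^2|w-\mu a_2|^{2\beta_2-2}|w-\mu a_3|^{2\beta_3-2}\,i\,dw\wedge d\bar w$$ on $\mathbf{C}$. Then the distance function of $\omega_{F,\mu}$ converges uniformly on compact sets to the distance function of $\mathbf{C}_\gamma$ (i.e. of $\gamma^2|w|^{2\gamma-2}i\,dw\wedge d\bar w$) as $\mu\to0$. More precisely, for every compact $K\subset\mathbf{C}$ there is $C>0$ such that $$|d_{\omega_{F,\mu}}(p,q)-d_{\mathbf{C}_\gamma}(p,q)|\le C|\mu|^\gamma$$ for all $p,q\in K$ and all $0<|\mu|<1$. *)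

theory Defs
  imports "HOL-Analysis.Analysis"
begin

text \<open>Length of a piecewise C1 path g on [0,1] in the conformal metric with
  density rho, i.e. the metric rho(w) |dw|^2 (the form rho i dw wedge dw-bar up to
  a fixed constant factor).\<close>
definition conf_length :: "(complex \<Rightarrow> real) \<Rightarrow> (real \<Rightarrow> complex) \<Rightarrow> ennreal" where
  "conf_length rho g =
     (\<integral>\<^sup>+ t. ennreal (sqrt (rho (g t)) * norm (vector_derivative g (at t))) * indicator {0..1} t \<partial>lborel)"

definition conf_dist :: "(complex \<Rightarrow> real) \<Rightarrow> complex \<Rightarrow> complex \<Rightarrow> ennreal" where
  "conf_dist rho p q =
     (INF g \<in> {g. valid_path g \<and> pathstart g = p \<and> pathfinish g = q}. conf_length rho g)"

definition omegaF_density :: "real \<Rightarrow> real \<Rightarrow> complex \<Rightarrow> complex \<Rightarrow> complex \<Rightarrow> complex \<Rightarrow> real" where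
  "omegaF_density \<beta>2 \<beta>3 a2 a3 \<mu> w =
     (\<beta>2 + \<beta>3 - 1)\<^sup>2 * norm (w - \<mu> * a2) powr (2 * \<beta>2 - 2) * norm (w - \<mu> * a3) powr (2 * \<beta>3 - 2)"

definition cone_density :: "real \<Rightarrow> complex \<Rightarrow> real" where
  "cone_density \<gamma> w = \<gamma>\<^sup>2 * norm w powr (2 * \<gamma> - 2)"

end

theory Submission
  imports Defs
begin

text \<open>
  Both metrics are conformal, with line element sqrt rho |dw|, and they are compared for general
  densities rho1, rho2. Suppose that in both metrics every segment [x, y] has length at most
  M |y - x|^e, and that sqrt rho2 <= sqrt rho1 (1 + c r / |w|) for |w| >= r. Take a path that is
  nearly minimal for rho1. Replacing a piece of it by a segment cannot shorten it much, so its
  rho1-length inside a disc of radius s is at most M (2 s)^e plus the slack; summing over the discs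
  of radii 2^k r, its rho1-length weighted by r / |w| outside the disc of radius r is O(r^e).
  Cutting out the part between the first and the last visit to the disc of radius r and inserting
  a segment costs O(r^e), and on the remaining part the rho2-length exceeds the rho1-length by at
  most c times the weighted length. Hence d_rho2 <= d_rho1 + O(r^e), and symmetrically.
  For omega_F,mu and the cone C_gamma one can take e = gamma, M = 6, c = 3 and r = 2 A |mu| with
  A >= |a2|, |a3|, which yields the bound C |mu|^gamma.
\<close>

lemma borel_measurable_path_comp:
  fixes g :: "real \<Rightarrow> 'a::topological_space" and h :: "'a \<Rightarrow> ennreal"
  assumes "path g" and [measurable]: "h \<in> borel_measurable borel"
  shows "(\<lambda>t. h (g t) * indicator {0..1} t) \<in> borel_measurable borel"
proof -
  define G where "G t = g (max 0 (min 1 t))" for t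
  have "continuous_on UNIV G"
    unfolding G_def
    by (rule continuous_on_compose2[OF assms(1)[unfolded path_def]])
       (auto intro!: continuous_on_max continuous_on_min)
  then have [measurable]: "G \<in> borel_measurable borel"
    by (rule borel_measurable_continuous_onI)
  have "(\<lambda>t. h (G t) * indicator {0..1} t) \<in> borel_measurable borel"
    by measurable
  then show ?thesis
    by (rule measurable_cong[THEN iffD1, rotated]) (auto simp: G_def indicator_def)
qed

section \<open>Lengths of pieces of a path\<close>

definition conf_length_on :: "(complex \<Rightarrow> real) \<Rightarrow> (real \<Rightarrow> complex) \<Rightarrow> real set \<Rightarrow> ennreal" where
  "conf_length_on rho g S =
     (\<integral>\<^sup>+ t. ennreal (sqrt (rho (g t)) * norm (vector_derivative g (at t))) * indicator S t \<partial>lborel)"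

lemma conf_length_eq_on: "conf_length rho g = conf_length_on rho g {0..1}"
  by (simp add: conf_length_def conf_length_on_def)

lemma valid_path_differentiable_off_finite:
  assumes "valid_path g"
  obtains N where "finite N" "\<And>t. t \<in> {0..1} - N \<Longrightarrow> g differentiable (at t)"
    "continuous_on ({0..1} - N) (\<lambda>t. vector_derivative g (at t))"
  using assms unfolding valid_path_def piecewise_C1_differentiable_on_def C1_differentiable_on_eq
  by blast

lemma borel_measurable_conf_speed:
  fixes g :: "real \<Rightarrow> complex"
  assumes g: "valid_path g" and [measurable]: "rho \<in> borel_measurable borel"
  shows "(\<lambda>t. ennreal (sqrt (rho (g t)) * norm (vector_derivative g (at t))) * indicator {0..1} t)
           \<in> borel_measurable borel"
proof -
  obtain N where N: "finite N" "continuous_on ({0..1} - N) (\<lambda>t. vector_derivative g (at t))"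
    using valid_path_differentiable_off_finite[OF g] by blast
  have [measurable]: "{0..1} - N \<in> sets borel"
    using N(1) by (simp add: sets.Diff borel_closed finite_imp_closed)
  define D where "D t = indicator ({0..1} - N) t *\<^sub>R vector_derivative g (at t)" for t
  have [measurable]: "D \<in> borel_measurable borel"
    unfolding D_def by (rule borel_measurable_continuous_on_indicator[OF _ N(2)]) simp
  have [measurable]: "(\<lambda>t. ennreal (sqrt (rho (g t))) * indicator {0..1} t) \<in> borel_measurable borel"
    by (rule borel_measurable_path_comp[OF valid_path_imp_path[OF g]]) measurable
  show ?thesis
  proof (rule measurable_discrete_difference[where X = N])
    show "(\<lambda>t. ennreal (sqrt (rho (g t))) * indicator {0..1} t * ennreal (norm (D t)))
            \<in> borel_measurable borel"
      by measurable
  qed (use N(1) in \<open>auto simp: D_def indicator_def ennreal_mult'' countable_finite\<close>)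
qed

lemma conf_length_on_eq_nn_integral:
  "S \<subseteq> {0..1} \<Longrightarrow> conf_length_on rho g S = (\<integral>\<^sup>+ t.
     (ennreal (sqrt (rho (g t)) * norm (vector_derivative g (at t))) * indicator {0..1} t) * indicator S t \<partial>lborel)"
  unfolding conf_length_on_def by (intro nn_integral_cong) (auto simp: indicator_def)

lemma conf_length_on_mono: "S \<subseteq> T \<Longrightarrow> conf_length_on rho g S \<le> conf_length_on rho g T"
  unfolding conf_length_on_def by (intro nn_integral_mono mult_left_mono) (auto simp: indicator_def)

lemma conf_length_on_cong_AE:
  "(AE t in lborel. t \<in> S \<longleftrightarrow> t \<in> T) \<Longrightarrow> conf_length_on rho g S = conf_length_on rho g T"
  unfolding conf_length_on_def by (rule nn_integral_cong_AE) (auto simp: indicator_def)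

lemma conf_length_on_empty [simp]: "conf_length_on rho g {} = 0"
  by (simp add: conf_length_on_def)

lemma conf_length_on_Un:
  fixes g :: "real \<Rightarrow> complex"
  assumes "valid_path g" "rho \<in> borel_measurable borel"
    and [measurable]: "S \<in> sets borel" "T \<in> sets borel"
    and "S \<union> T \<subseteq> {0..1}" "S \<inter> T = {}"
  shows "conf_length_on rho g (S \<union> T) = conf_length_on rho g S + conf_length_on rho g T"
proof -
  note [measurable] = borel_measurable_conf_speed[OF assms(1,2)]
  have "indicator (S \<union> T) t = (indicator S t + indicator T t :: ennreal)" for t
    using assms(6) by (auto simp: indicator_def)
  then show ?thesis
    using assms(5) by (simp add: conf_length_on_eq_nn_integral distrib_left nn_integral_add)
qed

lemma conf_length_on_split:
  fixes g :: "real \<Rightarrow> complex"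
  assumes "valid_path g" "rho \<in> borel_measurable borel" "0 \<le> a" "a \<le> b" "b \<le> c" "c \<le> 1"
  shows "conf_length_on rho g {a..c} = conf_length_on rho g {a..b} + conf_length_on rho g {b..c}"
proof -
  have "conf_length_on rho g {a..b} = conf_length_on rho g {a..<b}"
    by (rule conf_length_on_cong_AE) (use AE_lborel_singleton[of b] in \<open>eventually_elim, auto\<close>)
  moreover have "{a..c} = {a..<b} \<union> {b..c}"
    using assms by auto
  moreover have "conf_length_on rho g ({a..<b} \<union> {b..c}) =
      conf_length_on rho g {a..<b} + conf_length_on rho g {b..c}"
    by (rule conf_length_on_Un) (use assms in auto)
  ultimately show ?thesis
    by simp
qed

lemma vector_derivative_subpath:
  fixes g :: "real \<Rightarrow> 'a::real_normed_vector"
  assumes "g differentiable (at ((b - a) * x + a))"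
  shows "vector_derivative (subpath a b g) (at x) = (b - a) *\<^sub>R vector_derivative g (at ((b - a) * x + a))"
proof -
  have "((\<lambda>x. (b - a) * x + a) has_vector_derivative (b - a)) (at x)"
    by (intro derivative_eq_intros | simp)+
  moreover have "(g has_vector_derivative vector_derivative g (at ((b - a) * x + a))) (at ((b - a) * x + a))"
    using assms by (simp add: vector_derivative_works)
  ultimately show ?thesis
    unfolding subpath_def by (intro vector_derivative_at vector_diff_chain_at[unfolded o_def])
qed

lemma affine_in_atLeastAtMost_iff:
  fixes a b x :: real
  assumes "a < b"
  shows "(b - a) * x + a \<in> {a..b} \<longleftrightarrow> x \<in> {0..1}"
proof -
  have "(b - a) * x + a \<in> {a..b} \<longleftrightarrow> (b - a) * 0 \<le> (b - a) * x \<and> (b - a) * x \<le> (b - a) * 1"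
    by (auto simp: algebra_simps)
  also have "\<dots> \<longleftrightarrow> x \<in> {0..1}"
    using assms by (simp only: mult_le_cancel_left_pos) auto
  finally show ?thesis .
qed

lemma conf_length_subpath:
  fixes g :: "real \<Rightarrow> complex"
  assumes g: "valid_path g" and rho [measurable]: "rho \<in> borel_measurable borel"
    and ab: "0 \<le> a" "a \<le> b" "b \<le> 1"
  shows "conf_length rho (subpath a b g) = conf_length_on rho g {a..b}"
proof (cases "a = b")
  case True
  have "conf_length_on rho g {a..b} = conf_length_on rho g {}"
    by (rule conf_length_on_cong_AE) (use AE_lborel_singleton[of a] True in auto)
  then show ?thesis
    using True by (simp add: conf_length_def subpath_def)
next
  case False
  with ab have ab: "0 \<le> a" "a < b" "b \<le> 1"
    by auto
  define F where "F t = ennreal (sqrt (rho (g t)) * norm (vector_derivative g (at t))) * indicator {0..1} t" for t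
  have [measurable]: "F \<in> borel_measurable borel"
    unfolding F_def by (rule borel_measurable_conf_speed[OF g rho])
  define s where "s x = (b - a) * x + a" for x
  obtain N where N: "finite N" "\<And>t. t \<in> {0..1} - N \<Longrightarrow> g differentiable (at t)"
    using valid_path_differentiable_off_finite[OF g] by blast
  have "finite (s -` N)"
    using ab N(1) by (intro finite_vimageI) (auto simp: inj_on_def s_def)
  from AE_not_in[OF finite_imp_null_set_lborel[OF this]]
  have AE: "AE x in lborel. s x \<notin> N"
    by simp
  have in_ab: "s x \<in> {a..b} \<longleftrightarrow> x \<in> {0..1}" for x
    unfolding s_def using ab(2) by (rule affine_in_atLeastAtMost_iff)
  have "conf_length_on rho g {a..b} = (\<integral>\<^sup>+ t. F t * indicator {a..b} t \<partial>lborel)"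
    using ab by (simp add: conf_length_on_eq_nn_integral F_def)
  also have "\<dots> = ennreal (b - a) * (\<integral>\<^sup>+ x. F (s x) * indicator {a..b} (s x) \<partial>lborel)"
    using ab nn_integral_real_affine[of "\<lambda>t. F t * indicator {a..b} t" "b - a" a]
    by (simp add: s_def add.commute)
  also have "\<dots> = (\<integral>\<^sup>+ x. ennreal (b - a) * (F (s x) * indicator {a..b} (s x)) \<partial>lborel)"
    by (rule nn_integral_cmult[symmetric]) (simp add: s_def)
  also have "\<dots> = conf_length rho (subpath a b g)"
    unfolding conf_length_def
  proof (rule nn_integral_cong_AE, use AE in eventually_elim)
    case (elim x)
    show ?case
    proof (cases "x \<in> {0..1}")
      case True
      then have sx: "s x \<in> {0..1} - N"
        using elim in_ab[of x] ab by auto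
      have "vector_derivative (subpath a b g) (at x) = (b - a) *\<^sub>R vector_derivative g (at (s x))"
        unfolding s_def by (rule vector_derivative_subpath) (use N(2)[OF sx] in \<open>simp add: s_def\<close>)
      then show ?thesis
        using True sx ab in_ab[of x]
        by (simp add: F_def subpath_def s_def ennreal_mult' mult_ac)
    qed (use in_ab in simp)
  qed
  finally show ?thesis ..
qed

lemma conf_length_cong:
  assumes "\<And>t. t \<in> {0<..<1} \<Longrightarrow> g t = h t"
  shows "conf_length rho g = conf_length rho h"
  unfolding conf_length_def
proof (rule nn_integral_cong_AE)
  have vd: "vector_derivative g (at t) = vector_derivative h (at t)" if "t \<in> {0<..<1}" for t
    using that assms
    by (intro vector_derivative_cong_eq[of UNIV g h t t UNIV])
       (auto simp: eventually_nhds intro!: exI[of _ "{0<..<1}"])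
  show "AE t in lborel.
      ennreal (sqrt (rho (g t)) * norm (vector_derivative g (at t))) * indicator {0..1} t =
      ennreal (sqrt (rho (h t)) * norm (vector_derivative h (at t))) * indicator {0..1} t"
    using AE_lborel_singleton[of 0] AE_lborel_singleton[of 1]
    by eventually_elim (auto simp: assms vd indicator_def)
qed

lemma conf_length_join:
  fixes g1 g2 :: "real \<Rightarrow> complex"
  assumes g1: "valid_path g1" and g2: "valid_path g2" and "pathfinish g1 = pathstart g2"
    and rho: "rho \<in> borel_measurable borel"
  shows "conf_length rho (g1 +++ g2) = conf_length rho g1 + conf_length rho g2"
proof -
  let ?g = "g1 +++ g2"
  have g: "valid_path ?g"
    using g1 g2 assms(3) by (rule valid_path_join)
  have "conf_length rho ?g = conf_length_on rho ?g {0..1/2} + conf_length_on rho ?g {1/2..1}"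
    unfolding conf_length_eq_on by (rule conf_length_on_split[OF g rho]) auto
  also have "conf_length_on rho ?g {0..1/2} = conf_length rho (subpath 0 (1/2) ?g)"
    by (rule conf_length_subpath[OF g rho, symmetric]) auto
  also have "\<dots> = conf_length rho g1"
    by (rule conf_length_cong) (simp add: subpath_def joinpaths_def)
  also have "conf_length_on rho ?g {1/2..1} = conf_length rho (subpath (1/2) 1 ?g)"
    by (rule conf_length_subpath[OF g rho, symmetric]) auto
  also have "\<dots> = conf_length rho g2"
    by (rule conf_length_cong) (simp add: subpath_def joinpaths_def algebra_simps)
  finally show ?thesis .
qed

lemma conf_length_on_outside_interval:
  fixes g :: "real \<Rightarrow> complex"
  assumes g: "valid_path g" and rho: "rho \<in> borel_measurable borel"
    and ab: "0 \<le> a" "a \<le> b" "b \<le> 1"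
  shows "conf_length_on rho g {0..a} + conf_length_on rho g {b..1} = conf_length_on rho g ({0..<a} \<union> {b<..1})"
proof -
  have "conf_length_on rho g {0..a} = conf_length_on rho g {0..<a}"
    by (rule conf_length_on_cong_AE) (use AE_lborel_singleton[of a] in \<open>eventually_elim, auto\<close>)
  moreover have "conf_length_on rho g {b..1} = conf_length_on rho g {b<..1}"
    by (rule conf_length_on_cong_AE) (use AE_lborel_singleton[of b] in \<open>eventually_elim, auto\<close>)
  moreover have "conf_length_on rho g ({0..<a} \<union> {b<..1})
      = conf_length_on rho g {0..<a} + conf_length_on rho g {b<..1}"
    by (rule conf_length_on_Un[OF g rho]) (use ab in auto)
  ultimately show ?thesis
    by simp
qed

lemma conf_dist_le_conf_length:
  "valid_path h \<Longrightarrow> pathstart h = p \<Longrightarrow> pathfinish h = q \<Longrightarrow> conf_dist rho p q \<le> conf_length rho h"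
  unfolding conf_dist_def by (rule INF_lower) auto

lemma conf_dist_le_detour:
  fixes g h :: "real \<Rightarrow> complex"
  assumes g: "valid_path g" "pathstart g = p" "pathfinish g = q"
    and ab: "0 \<le> a" "a \<le> b" "b \<le> 1"
    and h: "valid_path h" "pathstart h = g a" "pathfinish h = g b"
    and rho: "rho \<in> borel_measurable borel"
  shows "conf_dist rho p q \<le> conf_length_on rho g {0..a} + conf_length rho h + conf_length_on rho g {b..1}"
proof -
  let ?g0 = "subpath 0 a g" and ?g1 = "subpath b 1 g"
  have v: "valid_path ?g0" "valid_path ?g1"
    using ab by (auto intro!: valid_path_subpath g(1))
  have "valid_path (?g0 +++ (h +++ ?g1))"
    using v h by (auto intro!: valid_path_join)
  then have "conf_dist rho p q \<le> conf_length rho (?g0 +++ (h +++ ?g1))"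
    by (rule conf_dist_le_conf_length)
       (use g in \<open>auto simp: pathstart_def pathfinish_def joinpaths_def subpath_def\<close>)
  also have "\<dots> = conf_length rho ?g0 + (conf_length rho h + conf_length rho ?g1)"
    using v h rho by (simp add: conf_length_join valid_path_join)
  also have "\<dots> = conf_length_on rho g {0..a} + conf_length rho h + conf_length_on rho g {b..1}"
    using ab by (simp add: conf_length_subpath[OF g(1) rho] add.assoc)
  finally show ?thesis .
qed

section \<open>Comparison of two conformal metrics\<close>

definition segments_holder :: "real \<Rightarrow> real \<Rightarrow> (complex \<Rightarrow> real) \<Rightarrow> bool" where
  "segments_holder M e rho \<longleftrightarrow> (\<forall>x y. conf_length rho (linepath x y) \<le> ennreal (M * norm (y - x) powr e))"

lemma segments_holder_mono:
  "segments_holder M e rho \<Longrightarrow> M \<le> M' \<Longrightarrow> segments_holder M' e rho"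
  unfolding segments_holder_def
  by (meson order_trans ennreal_leI mult_right_mono powr_ge_zero)

lemma conf_length_le_add:
  fixes g :: "real \<Rightarrow> complex"
  assumes g: "valid_path g"
    and rho: "rho_a \<in> borel_measurable borel" "rho_b \<in> borel_measurable borel"
      "\<And>w. 0 \<le> rho_a w" "\<And>w. 0 \<le> rho_b w"
    and le: "\<And>w. sqrt (rho w) \<le> sqrt (rho_a w) + sqrt (rho_b w)"
  shows "conf_length rho g \<le> conf_length rho_a g + conf_length rho_b g"
proof -
  let ?s = "\<lambda>r t. ennreal (sqrt (r (g t)) * norm (vector_derivative g (at t))) * indicator {0..1} t"
  have "conf_length rho g \<le> (\<integral>\<^sup>+t. ?s rho_a t + ?s rho_b t \<partial>lborel)"
    unfolding conf_length_def
  proof (intro nn_integral_mono)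
    fix t
    have "ennreal (sqrt (rho (g t)) * norm (vector_derivative g (at t)))
        \<le> ennreal ((sqrt (rho_a (g t)) + sqrt (rho_b (g t))) * norm (vector_derivative g (at t)))"
      by (intro ennreal_leI mult_right_mono le) simp
    also have "\<dots> = ennreal (sqrt (rho_a (g t)) * norm (vector_derivative g (at t)))
        + ennreal (sqrt (rho_b (g t)) * norm (vector_derivative g (at t)))"
      using rho(3,4) by (simp add: distrib_right)
    finally show "?s rho t \<le> ?s rho_a t + ?s rho_b t"
      by (auto simp: indicator_def)
  qed
  also have "\<dots> = conf_length rho_a g + conf_length rho_b g"
    using borel_measurable_conf_speed[OF g rho(1)] borel_measurable_conf_speed[OF g rho(2)]
    unfolding conf_length_def by (intro nn_integral_add) auto
  finally show ?thesis .
qed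

lemma segments_holder_add:
  assumes "segments_holder M e rho_a" "segments_holder N e rho_b" "0 \<le> M" "0 \<le> N"
    and "rho_a \<in> borel_measurable borel" "rho_b \<in> borel_measurable borel"
      "\<And>w. 0 \<le> rho_a w" "\<And>w. 0 \<le> rho_b w"
    and "\<And>w. sqrt (rho w) \<le> sqrt (rho_a w) + sqrt (rho_b w)"
  shows "segments_holder (M + N) e rho"
  unfolding segments_holder_def
proof (intro allI)
  fix x y :: complex
  have "conf_length rho (linepath x y) \<le> conf_length rho_a (linepath x y) + conf_length rho_b (linepath x y)"
    by (rule conf_length_le_add) (use assms in auto)
  also have "\<dots> \<le> ennreal (M * norm (y - x) powr e) + ennreal (N * norm (y - x) powr e)"
    using assms(1,2) unfolding segments_holder_def by (intro add_mono) auto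
  also have "\<dots> = ennreal ((M + N) * norm (y - x) powr e)"
    using assms(3,4) by (simp add: distrib_right)
  finally show "conf_length rho (linepath x y) \<le> ennreal ((M + N) * norm (y - x) powr e)" .
qed

lemma conf_dist_le_segment:
  assumes "segments_holder M e rho"
  shows "conf_dist rho p q \<le> ennreal (M * norm (q - p) powr e)"
proof -
  have "conf_dist rho p q \<le> conf_length rho (linepath p q)"
    by (rule conf_dist_le_conf_length) auto
  also have "\<dots> \<le> ennreal (M * norm (q - p) powr e)"
    using assms unfolding segments_holder_def by blast
  finally show ?thesis .
qed

lemma holder_bound_in_cball:
  fixes x y :: "'a::real_normed_vector"
  assumes "norm x \<le> s" "norm y \<le> s" "0 \<le> M" "0 \<le> e"
  shows "M * norm (y - x) powr e \<le> M * (2 * s) powr e"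
  using assms norm_triangle_ineq4[of y x] by (intro mult_left_mono powr_mono2) auto

lemma path_first_last_times:
  fixes g :: "real \<Rightarrow> 'a::topological_space"
  assumes "path g" "closed C" "\<exists>t\<in>{0..1}. g t \<in> C"
  obtains t1 t2 where "0 \<le> t1" "t1 \<le> t2" "t2 \<le> 1" "g t1 \<in> C" "g t2 \<in> C"
    "\<And>t. t \<in> {0..1} \<Longrightarrow> g t \<in> C \<Longrightarrow> t1 \<le> t \<and> t \<le> t2"
proof -
  define S where "S = {0..1} \<inter> g -` C"
  have "closed S"
    unfolding S_def using assms(1,2) unfolding path_def by (intro continuous_closed_preimage) auto
  moreover have "S \<noteq> {}" "bdd_below S" "bdd_above S"
    using assms(3) by (auto simp: S_def bdd_below_def bdd_above_def)
  ultimately have "Inf S \<in> S" "Sup S \<in> S"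
    by (auto intro: closed_contains_Inf closed_contains_Sup)
  with \<open>bdd_below S\<close> \<open>bdd_above S\<close> show ?thesis
    by (intro that[of "Inf S" "Sup S"]) (auto simp: S_def intro: cInf_lower cSup_upper)
qed

lemma conf_dist_near_minimal_path:
  assumes "conf_dist rho p q < \<infinity>" "0 < d"
  obtains g where "valid_path g" "pathstart g = p" "pathfinish g = q"
    "conf_length rho g < conf_dist rho p q + d"
proof -
  have "conf_dist rho p q < conf_dist rho p q + d"
    using assms by (simp add: ennreal_add_left_cancel_less)
  then show ?thesis
    using that unfolding conf_dist_def[of rho p q] by (auto simp: INF_less_iff conf_dist_def)
qed

lemma near_minimal_conf_length_on_le:
  fixes g :: "real \<Rightarrow> complex"
  assumes g: "valid_path g" "pathstart g = p" "pathfinish g = q"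
    and rho: "rho \<in> borel_measurable borel"
    and near_min: "conf_length rho g < conf_dist rho p q + d"
    and seg: "segments_holder M e rho"
    and ab: "0 \<le> a" "a \<le> b" "b \<le> 1"
  shows "conf_length_on rho g {a..b} \<le> ennreal (M * norm (g b - g a) powr e) + d"
proof (rule ccontr)
  let ?L = "conf_length_on rho g"
  assume "\<not> ?thesis"
  then have lt: "conf_length rho (linepath (g a) (g b)) + d < ?L {a..b}"
    using seg unfolding segments_holder_def by (metis add_right_mono not_le order_le_less_trans)
  have "conf_dist rho p q \<le> ?L {0..a} + conf_length rho (linepath (g a) (g b)) + ?L {b..1}"
    by (rule conf_dist_le_detour[OF g ab valid_path_linepath _ _ rho]) simp_all
  then have "conf_dist rho p q + d \<le> ?L {0..a} + (conf_length rho (linepath (g a) (g b)) + d) + ?L {b..1}"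
    using add_right_mono by (fastforce simp: ac_simps)
  also have "\<dots> \<le> ?L {0..a} + ?L {a..b} + ?L {b..1}"
    using less_imp_le[OF lt] by (intro add_mono order_refl)
  also have "\<dots> = conf_length rho g"
    using conf_length_on_split[OF g(1) rho, of 0 a 1] conf_length_on_split[OF g(1) rho, of a b 1] ab
    by (simp add: conf_length_eq_on add.assoc)
  finally show False
    using near_min by simp
qed

lemma near_minimal_conf_length_in_disc:
  fixes g :: "real \<Rightarrow> complex"
  assumes g: "valid_path g" "pathstart g = p" "pathfinish g = q"
    and rho: "rho \<in> borel_measurable borel"
    and near_min: "conf_length rho g < conf_dist rho p q + d"
    and seg: "segments_holder M e rho" and M: "0 \<le> M" and e: "0 \<le> e"
  shows "conf_length_on rho g {t\<in>{0..1}. norm (g t) \<le> s} \<le> ennreal (M * (2 * s) powr e) + d"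
proof (cases "\<exists>t\<in>{0..1}. g t \<in> cball 0 s")
  case True
  then obtain t1 t2 where t: "0 \<le> t1" "t1 \<le> t2" "t2 \<le> 1" "g t1 \<in> cball 0 s" "g t2 \<in> cball 0 s"
    "\<And>t. t \<in> {0..1} \<Longrightarrow> g t \<in> cball 0 s \<Longrightarrow> t1 \<le> t \<and> t \<le> t2"
    using path_first_last_times[OF valid_path_imp_path[OF g(1)] closed_cball] by blast
  have "conf_length_on rho g {t\<in>{0..1}. norm (g t) \<le> s} \<le> conf_length_on rho g {t1..t2}"
    using t(6) by (intro conf_length_on_mono) auto
  also have "\<dots> \<le> ennreal (M * norm (g t2 - g t1) powr e) + d"
    by (rule near_minimal_conf_length_on_le[OF g rho near_min seg t(1-3)])
  also have "\<dots> \<le> ennreal (M * (2 * s) powr e) + d"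
    using holder_bound_in_cball[of "g t1" s "g t2" M e] t(4,5) M e
    by (intro add_right_mono ennreal_leI) auto
  finally show ?thesis .
next
  case False
  then have "{t\<in>{0..1}. norm (g t) \<le> s} = {}"
    by auto
  then show ?thesis
    by (metis conf_length_on_empty zero_le)
qed

definition tail_weight :: "real \<Rightarrow> complex \<Rightarrow> real" where
  "tail_weight r z = (if r \<le> norm z then r / norm z else 0)"

definition conf_tail_length :: "(complex \<Rightarrow> real) \<Rightarrow> real \<Rightarrow> (real \<Rightarrow> complex) \<Rightarrow> ennreal" where
  "conf_tail_length rho r g = (\<integral>\<^sup>+ t. ennreal (sqrt (rho (g t)) * norm (vector_derivative g (at t)) *
     tail_weight r (g t)) * indicator {0..1} t \<partial>lborel)"

lemma tail_weight_nonneg: "0 \<le> r \<Longrightarrow> 0 \<le> tail_weight r z"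
  by (simp add: tail_weight_def)

lemma borel_measurable_conf_tail_integrand:
  fixes g :: "real \<Rightarrow> complex"
  assumes g: "valid_path g" and rho: "rho \<in> borel_measurable borel" and r: "0 \<le> r"
  shows "(\<lambda>t. ennreal (sqrt (rho (g t)) * norm (vector_derivative g (at t)) * tail_weight r (g t))
           * indicator {0..1} t) \<in> borel_measurable borel"
proof -
  have [measurable]: "(\<lambda>z. ennreal (tail_weight r z)) \<in> borel_measurable borel"
    unfolding tail_weight_def by measurable
  note [measurable] = borel_measurable_conf_speed[OF g rho]
    borel_measurable_path_comp[OF valid_path_imp_path[OF g] this]
  have "(\<lambda>t. (ennreal (sqrt (rho (g t)) * norm (vector_derivative g (at t))) * indicator {0..1} t)
      * (ennreal (tail_weight r (g t)) * indicator {0..1} t)) \<in> borel_measurable borel"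
    by measurable
  then show ?thesis
    by (rule measurable_cong[THEN iffD1, rotated])
       (simp add: indicator_def ennreal_mult'' tail_weight_nonneg[OF r])
qed

lemma dyadic_scale_exists:
  fixes x r :: real
  assumes "0 < r" "r \<le> x"
  obtains k where "x \<le> 2^(k+1) * r" "r / x \<le> (1/2)^k"
proof -
  obtain n where "x / r < 2^n"
    using real_arch_pow[of 2 "x / r"] by auto
  then have "x \<le> 2^(n+1) * r"
    using assms by (simp add: divide_less_eq)
  then have ex: "\<exists>n. x \<le> 2^(n+1) * r" ..
  define k where "k = (LEAST n. x \<le> 2^(n+1) * r)"
  have "x \<le> 2^(k+1) * r"
    unfolding k_def by (rule LeastI_ex[OF ex])
  moreover have "r / x \<le> (1/2)^k"
  proof (cases k)
    case (Suc j)
    then have "\<not> x \<le> 2^(j+1) * r"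
      unfolding k_def by (metis lessI not_less_Least)
    then have "r / x \<le> r / (2^k * r)"
      using assms Suc by (intro divide_left_mono) auto
    then show ?thesis
      using assms by (simp add: power_one_over)
  qed (use assms in simp)
  ultimately show ?thesis
    by (rule that)
qed

lemma dyadic_powr_sums:
  fixes e r M :: real
  assumes "0 < r" "e < 1"
  shows "(\<lambda>k. (1/2)^k * (M * (2^(k+2) * r) powr e))
           sums (M * (2 powr e)^2 * r powr e / (1 - 2 powr e / 2))"
proof -
  define C q where "C = M * (2 powr e)^2 * r powr e" and "q = (2 powr e / 2 :: real)"
  have "q < 1"
    using assms(2) powr_less_mono[of e 1 2] by (simp add: q_def)
  then have geometric: "(\<lambda>k. C * q^k) sums (C * (1 / (1 - q)))"
    by (intro sums_mult geometric_sums) (simp add: q_def)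
  have "(1/2)^k * (M * (2^(k+2) * r) powr e) = C * q^k" for k
  proof -
    have pow2: "((2::real)^n) powr e = (2 powr e)^n" for n
      by (simp add: powr_realpow[symmetric] powr_powr powr_power mult.commute)
    have "(2^(k+2) * r) powr e = (2^(k+2)) powr e * r powr e"
      by (rule powr_mult)
    also have "\<dots> = (2 powr e)^(k+2) * r powr e"
      by (simp only: pow2)
    finally show ?thesis
      by (simp add: C_def q_def power_add power2_eq_square field_simps)
  qed
  then have terms: "(\<lambda>k. (1/2)^k * (M * (2^(k+2) * r) powr e)) = (\<lambda>k. C * q^k)"
    by (rule ext)
  have limit: "M * (2 powr e)^2 * r powr e / (1 - 2 powr e / 2) = C * (1 / (1 - q))"
    by (simp add: C_def q_def)
  show ?thesis
    unfolding terms limit by (rule geometric)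
qed

lemma path_sublevel_sets_borel:
  fixes g :: "real \<Rightarrow> 'a::real_normed_vector"
  assumes "path g"
  shows "{t\<in>{0..1}. norm (g t) \<le> s} \<in> sets borel"
proof -
  have "closed ({0..1} \<inter> (\<lambda>t. norm (g t)) -` {..s})"
    using assms unfolding path_def by (intro continuous_closed_preimage continuous_intros) auto
  moreover have "{0..1} \<inter> (\<lambda>t. norm (g t)) -` {..s} = {t\<in>{0..1}. norm (g t) \<le> s}"
    by auto
  ultimately show ?thesis
    by (simp add: borel_closed)
qed

lemma conf_tail_length_le_dyadic:
  fixes g :: "real \<Rightarrow> complex"
  assumes g: "valid_path g" and rho: "rho \<in> borel_measurable borel" "\<And>w. 0 \<le> rho w"
    and r: "0 < r"
  shows "conf_tail_length rho r g
    \<le> (\<Sum>k. ennreal ((1/2)^k) * conf_length_on rho g {t\<in>{0..1}. norm (g t) \<le> 2^(k+1) * r})"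
proof -
  define F where "F t = ennreal (sqrt (rho (g t)) * norm (vector_derivative g (at t))) * indicator {0..1} t" for t
  define S where "S k = {t\<in>{0..1}. norm (g t) \<le> 2^(k+1) * r}" for k :: nat
  have [measurable]: "F \<in> borel_measurable borel"
    unfolding F_def by (rule borel_measurable_conf_speed[OF g rho(1)])
  have [measurable]: "S k \<in> sets borel" for k
    unfolding S_def by (rule path_sublevel_sets_borel[OF valid_path_imp_path[OF g]])
  have "conf_tail_length rho r g \<le> (\<integral>\<^sup>+ t. (\<Sum>k. ennreal ((1/2)^k) * (F t * indicator (S k) t)) \<partial>lborel)"
    unfolding conf_tail_length_def
  proof (rule nn_integral_mono)
    fix t
    let ?X = "sqrt (rho (g t)) * norm (vector_derivative g (at t))"
    show "ennreal (?X * tail_weight r (g t)) * indicator {0..1} t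
        \<le> (\<Sum>k. ennreal ((1/2)^k) * (F t * indicator (S k) t))"
    proof (cases "t \<in> {0..1} \<and> r \<le> norm (g t)")
      case True
      then obtain k where k: "norm (g t) \<le> 2^(k+1) * r" "r / norm (g t) \<le> (1/2)^k"
        using dyadic_scale_exists[OF r] by blast
      have "?X * tail_weight r (g t) \<le> ?X * (1/2)^k"
        using True k(2) rho(2) unfolding tail_weight_def by (intro mult_left_mono) auto
      then have "ennreal (?X * tail_weight r (g t)) * indicator {0..1} t \<le> ennreal (?X * (1/2)^k)"
        using True by (simp add: ennreal_leI)
      also have "\<dots> = ennreal ((1/2)^k) * (F t * indicator (S k) t)"
        using True k by (subst ennreal_mult'') (simp_all add: F_def S_def mult.commute)
      also have "\<dots> \<le> (\<Sum>k. ennreal ((1/2)^k) * (F t * indicator (S k) t))"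
        using sum_le_suminf[OF summableI, of "{k}"] by simp
      finally show ?thesis .
    qed (auto simp: tail_weight_def)
  qed
  also have "\<dots> = (\<Sum>k. ennreal ((1/2)^k) * (\<integral>\<^sup>+ t. F t * indicator (S k) t \<partial>lborel))"
    by (simp add: nn_integral_suminf nn_integral_cmult)
  also have "\<dots> = (\<Sum>k. ennreal ((1/2)^k) * conf_length_on rho g (S k))"
  proof -
    have "conf_length_on rho g (S k) = (\<integral>\<^sup>+ t. F t * indicator (S k) t \<partial>lborel)" for k
      unfolding F_def by (rule conf_length_on_eq_nn_integral) (auto simp: S_def)
    then show ?thesis
      by simp
  qed
  finally show ?thesis
    by (simp add: S_def)
qed

lemma near_minimal_conf_tail_length_le:
  fixes g :: "real \<Rightarrow> complex"
  assumes g: "valid_path g" "pathstart g = p" "pathfinish g = q"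
    and rho: "rho \<in> borel_measurable borel" "\<And>w. 0 \<le> rho w"
    and near_min: "conf_length rho g < conf_dist rho p q + d"
    and seg: "segments_holder M e rho" and M: "0 \<le> M" and e: "0 < e" "e < 1" and r: "0 < r"
  shows "conf_tail_length rho r g \<le> ennreal (M * (2 powr e)^2 * r powr e / (1 - 2 powr e / 2)) + 2 * d"
proof -
  let ?c = "\<lambda>k. ennreal ((1/2)^k)" and ?a = "\<lambda>k::nat. M * (2^(k+2) * r) powr e"
  have "conf_tail_length rho r g
      \<le> (\<Sum>k. ?c k * conf_length_on rho g {t\<in>{0..1}. norm (g t) \<le> 2^(k+1) * r})"
    by (rule conf_tail_length_le_dyadic[OF g(1) rho r])
  also have "\<dots> \<le> (\<Sum>k. ?c k * (ennreal (?a k) + d))"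
  proof (intro suminf_le summableI mult_left_mono)
    fix k :: nat
    have "2 * (2^(k+1) * r) = 2^(k+2) * r"
      by simp
    then show "conf_length_on rho g {t\<in>{0..1}. norm (g t) \<le> 2^(k+1) * r} \<le> ennreal (?a k) + d"
      using near_minimal_conf_length_in_disc[OF g rho(1) near_min seg M, of "2^(k+1) * r"] e
      by (simp add: mult.assoc)
  qed simp
  also have "\<dots> = (\<Sum>k. ennreal ((1/2)^k * ?a k) + ?c k * d)"
    using M by (intro suminf_cong) (simp add: distrib_left ennreal_mult)
  also have "\<dots> = (\<Sum>k. ennreal ((1/2)^k * ?a k)) + (\<Sum>k. ?c k * d)"
    by (rule suminf_add[symmetric]) (rule summableI)+
  also have "(\<Sum>k. ?c k * d) = (\<Sum>k. ?c k) * d"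
    by (rule ennreal_suminf_multc)
  also have "(\<Sum>k. ennreal ((1/2)^k * ?a k)) = ennreal (M * (2 powr e)^2 * r powr e / (1 - 2 powr e / 2))"
    by (rule suminf_ennreal_eq) (use M dyadic_powr_sums[OF r e(2), of M] in auto)
  also have "(\<Sum>k. ?c k) = ennreal (1 / (1 - 1/2))"
    by (rule suminf_ennreal_eq) (use geometric_sums[of "1/2::real"] in simp_all)
  finally show ?thesis
    by simp
qed

lemma conf_length_on_le_tail:
  fixes g :: "real \<Rightarrow> complex"
  assumes g: "valid_path g"
    and rho1: "rho1 \<in> borel_measurable borel" "\<And>w. 0 \<le> rho1 w"
    and r: "0 < r" and c: "0 \<le> c"
    and ratio: "\<And>w. r \<le> norm w \<Longrightarrow> sqrt (rho2 w) \<le> sqrt (rho1 w) * (1 + c * r / norm w)"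
    and U: "U \<subseteq> {t\<in>{0..1}. r \<le> norm (g t)}" and [measurable]: "U \<in> sets borel"
  shows "conf_length_on rho2 g U \<le> conf_length_on rho1 g U + ennreal c * conf_tail_length rho1 r g"
proof -
  define X where "X t = sqrt (rho1 (g t)) * norm (vector_derivative g (at t))" for t
  define Y where "Y t = ennreal (X t * tail_weight r (g t)) * indicator {0..1} t" for t
  have X: "0 \<le> X t" for t
    using rho1(2) by (simp add: X_def)
  have [measurable]: "(\<lambda>t. ennreal (X t) * indicator {0..1} t) \<in> borel_measurable borel"
    "Y \<in> borel_measurable borel"
    unfolding X_def Y_def using r
    by (auto intro: borel_measurable_conf_speed borel_measurable_conf_tail_integrand g rho1(1))
  have "conf_length_on rho2 g U \<le> (\<integral>\<^sup>+t. ennreal (X t) * indicator {0..1} t * indicator U t + ennreal c * Y t \<partial>lborel)"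
    unfolding conf_length_on_def
  proof (intro nn_integral_mono)
    fix t
    show "ennreal (sqrt (rho2 (g t)) * norm (vector_derivative g (at t))) * indicator U t
        \<le> ennreal (X t) * indicator {0..1} t * indicator U t + ennreal c * Y t"
    proof (cases "t \<in> U")
      case True
      then have t: "t \<in> {0..1}" "r \<le> norm (g t)"
        using U by auto
      have "sqrt (rho2 (g t)) * norm (vector_derivative g (at t))
          \<le> sqrt (rho1 (g t)) * (1 + c * r / norm (g t)) * norm (vector_derivative g (at t))"
        by (intro mult_right_mono ratio t) simp
      also have "\<dots> = X t + c * (X t * tail_weight r (g t))"
        using t by (simp add: X_def tail_weight_def algebra_simps)
      finally have "ennreal (sqrt (rho2 (g t)) * norm (vector_derivative g (at t)))
          \<le> ennreal (X t) + ennreal c * ennreal (X t * tail_weight r (g t))"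
        using X[of t] c r tail_weight_nonneg[of r "g t"]
        by (simp add: ennreal_leI flip: ennreal_mult ennreal_plus)
      then show ?thesis
        using True t by (simp add: Y_def)
    qed simp
  qed
  also have "\<dots> = (\<integral>\<^sup>+t. ennreal (X t) * indicator {0..1} t * indicator U t \<partial>lborel)
      + (\<integral>\<^sup>+t. ennreal c * Y t \<partial>lborel)"
    by (rule nn_integral_add) measurable
  also have "(\<integral>\<^sup>+t. ennreal c * Y t \<partial>lborel) = ennreal c * conf_tail_length rho1 r g"
    unfolding conf_tail_length_def X_def[symmetric] Y_def[symmetric] by (rule nn_integral_cmult) measurable
  also have "(\<integral>\<^sup>+t. ennreal (X t) * indicator {0..1} t * indicator U t \<partial>lborel) = conf_length_on rho1 g U"
    unfolding X_def by (rule conf_length_on_eq_nn_integral[symmetric]) (use U in auto)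
  finally show ?thesis .
qed

lemma conf_dist_le_detour_disc:
  fixes g :: "real \<Rightarrow> complex"
  assumes g: "valid_path g" "pathstart g = p" "pathfinish g = q"
    and rho1: "rho1 \<in> borel_measurable borel" "\<And>w. 0 \<le> rho1 w"
    and rho2: "rho2 \<in> borel_measurable borel"
    and r: "0 < r" and c: "0 \<le> c"
    and ratio: "\<And>w. r \<le> norm w \<Longrightarrow> sqrt (rho2 w) \<le> sqrt (rho1 w) * (1 + c * r / norm w)"
    and seg: "segments_holder M e rho2" and M: "0 \<le> M" and e: "0 \<le> e"
  shows "conf_dist rho2 p q
    \<le> conf_length rho1 g + ennreal c * conf_tail_length rho1 r g + ennreal (M * (2 * r) powr e)"
proof (cases "\<exists>t\<in>{0..1}. g t \<in> cball 0 r")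
  case True
  then obtain t1 t2 where t: "0 \<le> t1" "t1 \<le> t2" "t2 \<le> 1" "g t1 \<in> cball 0 r" "g t2 \<in> cball 0 r"
    "\<And>t. t \<in> {0..1} \<Longrightarrow> g t \<in> cball 0 r \<Longrightarrow> t1 \<le> t \<and> t \<le> t2"
    using path_first_last_times[OF valid_path_imp_path[OF g(1)] closed_cball] by blast
  define U where "U = {0..<t1} \<union> {t2<..1}"
  let ?L = "conf_length_on rho2 g" and ?E = "ennreal c * conf_tail_length rho1 r g"
  have U_far: "U \<subseteq> {t\<in>{0..1}. r \<le> norm (g t)}"
  proof
    fix x
    assume x: "x \<in> U"
    then have "x \<in> {0..1}" "\<not> (t1 \<le> x \<and> x \<le> t2)"
      using t(1-3) by (auto simp: U_def)
    then show "x \<in> {t\<in>{0..1}. r \<le> norm (g t)}"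
      using t(6)[of x] by (cases "norm (g x) \<le> r") auto
  qed
  have "conf_dist rho2 p q \<le> ?L {0..t1} + conf_length rho2 (linepath (g t1) (g t2)) + ?L {t2..1}"
    by (rule conf_dist_le_detour[OF g t(1-3) valid_path_linepath _ _ rho2]) simp_all
  also have "\<dots> = ?L U + conf_length rho2 (linepath (g t1) (g t2))"
    using conf_length_on_outside_interval[OF g(1) rho2 t(1-3)] by (simp add: U_def ac_simps)
  also have "?L U \<le> conf_length_on rho1 g U + ?E"
    by (rule conf_length_on_le_tail[OF g(1) rho1 r c ratio U_far]) (unfold U_def, measurable)
  also have "conf_length_on rho1 g U \<le> conf_length rho1 g"
    unfolding conf_length_eq_on U_def by (rule conf_length_on_mono) (use t in auto)
  also have "conf_length rho2 (linepath (g t1) (g t2)) \<le> ennreal (M * (2 * r) powr e)"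
    using seg holder_bound_in_cball[of "g t1" r "g t2" M e] t(4,5) M e
    unfolding segments_holder_def by (meson ennreal_leI order_trans mem_cball_0)
  finally show ?thesis
    by (simp add: add_mono)
next
  case False
  have "conf_dist rho2 p q \<le> conf_length_on rho2 g {0..1}"
    unfolding conf_length_eq_on[symmetric] by (rule conf_dist_le_conf_length[OF g])
  also have "\<dots> \<le> conf_length_on rho1 g {0..1} + ennreal c * conf_tail_length rho1 r g"
    by (rule conf_length_on_le_tail[OF g(1) rho1 r c ratio]) (use False in auto)
  finally have "conf_dist rho2 p q \<le> conf_length rho1 g + ennreal c * conf_tail_length rho1 r g"
    unfolding conf_length_eq_on .
  then show ?thesis
    by (rule order_trans) simp
qed

text \<open>The error terms d + c (B + 2 d) + M (2 r)^e of the comparison below, divided by r^e,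
  where d = r^e is the slack of the nearly minimal path and B bounds its weighted length.\<close>

definition comparison_const :: "real \<Rightarrow> real \<Rightarrow> real \<Rightarrow> real" where
  "comparison_const M c e = 1 + M * 2 powr e + c * (M * (2 powr e)^2 / (1 - 2 powr e / 2) + 2)"

lemma conf_dist_le_conf_dist_add:
  fixes rho1 rho2 :: "complex \<Rightarrow> real"
  assumes rho1: "rho1 \<in> borel_measurable borel" "\<And>w. 0 \<le> rho1 w"
    and rho2: "rho2 \<in> borel_measurable borel"
    and e: "0 < e" "e < 1" and r: "0 < r" and c: "0 \<le> c" and M: "0 \<le> M"
    and ratio: "\<And>w. r \<le> norm w \<Longrightarrow> sqrt (rho2 w) \<le> sqrt (rho1 w) * (1 + c * r / norm w)"
    and seg1: "segments_holder M e rho1" and seg2: "segments_holder M e rho2"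
  shows "conf_dist rho2 p q \<le> conf_dist rho1 p q + ennreal (comparison_const M c e * r powr e)"
proof -
  define d where "d = r powr e"
  define B where "B = M * (2 powr e)^2 * r powr e / (1 - 2 powr e / 2)"
  have q: "2 powr e / 2 < (1::real)"
    using e powr_less_mono[of e 1 2] by simp
  have d: "0 < d" and B: "0 \<le> B"
    using r M q by (auto simp: d_def B_def)
  have "conf_dist rho1 p q < \<infinity>"
    using conf_dist_le_segment[OF seg1, of p q] by (simp add: order_le_less_trans)
  then obtain g where g: "valid_path g" "pathstart g = p" "pathfinish g = q"
    and near_min: "conf_length rho1 g < conf_dist rho1 p q + ennreal d"
    using conf_dist_near_minimal_path[of rho1 p q "ennreal d"] d by auto
  have "conf_dist rho2 p q
      \<le> conf_length rho1 g + ennreal c * conf_tail_length rho1 r g + ennreal (M * (2 * r) powr e)"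
    using e by (intro conf_dist_le_detour_disc[OF g rho1 rho2 r c ratio seg2 M]) auto
  also have "\<dots> \<le> (conf_dist rho1 p q + ennreal d) + ennreal c * (ennreal B + 2 * ennreal d)
      + ennreal (M * (2 * r) powr e)"
    using near_minimal_conf_tail_length_le[OF g rho1 near_min seg1 M e r] near_min
    by (intro add_mono mult_left_mono) (auto simp: B_def)
  also have "\<dots> = conf_dist rho1 p q + ennreal (d + c * (B + 2 * d) + M * (2 * r) powr e)"
    using c B d M by (simp add: ennreal_mult add.assoc)
  also have "d + c * (B + 2 * d) + M * (2 * r) powr e = comparison_const M c e * r powr e"
    using q r by (simp add: comparison_const_def B_def d_def powr_mult field_simps)
  finally show ?thesis .
qed

section \<open>The densities of the cone and of omega_F,mu\<close>

lemma sqrt_cone_density: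
  assumes "0 < g"
  shows "sqrt (cone_density g z) = g * norm z powr (g - 1)"
proof -
  have "sqrt (norm z powr (2 * g - 2)) = norm z powr (g - 1)"
    by (simp add: powr_half_sqrt[symmetric] powr_powr algebra_simps)
  then show ?thesis
    using assms by (simp add: cone_density_def real_sqrt_mult)
qed

lemma nn_integral_abs_powr_unit_interval:
  assumes "0 < (e::real)"
  shows "(\<integral>\<^sup>+x. ennreal (\<bar>x\<bar> powr (e - 1)) * indicator {0..1} x \<partial>lborel) = ennreal (1 / e)"
proof -
  have "((\<lambda>x. x powr (e - 1)) has_integral (1 powr (e - 1 + 1) / (e - 1 + 1))) {0..1}"
    by (rule has_integral_powr_from_0) (use assms in auto)
  then have "((\<lambda>x::real. x powr (e - 1)) has_integral (1 / e)) {0..1}"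
    by simp
  then have "((\<lambda>x::real. \<bar>x\<bar> powr (e - 1)) has_integral (1 / e)) {0..1}"
    by (rule has_integral_eq[rotated]) auto
  then show ?thesis
    by (rule nn_integral_has_integral_lebesgue'[rotated]) auto
qed

lemma nn_integral_abs_powr_symmetric_interval:
  assumes "0 < (e::real)"
  shows "(\<integral>\<^sup>+x. ennreal (\<bar>x\<bar> powr (e - 1)) * indicator {-1..1} x \<partial>lborel) \<le> ennreal (2 / e)"
proof -
  define h where "h x = ennreal (\<bar>x\<bar> powr (e - 1)) * indicator {0..1} x" for x :: real
  have [measurable]: "h \<in> borel_measurable borel"
    unfolding h_def by measurable
  have "(\<integral>\<^sup>+x. ennreal (\<bar>x\<bar> powr (e - 1)) * indicator {-1..1} x \<partial>lborel)
      \<le> (\<integral>\<^sup>+x. h (- x) + h x \<partial>lborel)"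
    unfolding h_def by (intro nn_integral_mono) (auto simp: indicator_def)
  also have "\<dots> = (\<integral>\<^sup>+x. h (- x) \<partial>lborel) + (\<integral>\<^sup>+x. h x \<partial>lborel)"
    by (rule nn_integral_add) measurable
  also have "(\<integral>\<^sup>+x. h (- x) \<partial>lborel) = (\<integral>\<^sup>+x. h x \<partial>lborel)"
    using nn_integral_real_affine[of h "-1" 0] by simp
  also have "(\<integral>\<^sup>+x. h x \<partial>lborel) = ennreal (1 / e)"
    unfolding h_def by (rule nn_integral_abs_powr_unit_interval[OF assms])
  finally show ?thesis
    using assms by (simp flip: ennreal_plus)
qed

lemma nn_integral_shifted_abs_powr_le:
  assumes "0 < (e::real)" "e < 1"
  shows "(\<integral>\<^sup>+t. ennreal (\<bar>t - t0\<bar> powr (e - 1)) * indicator {0..1} t \<partial>lborel) \<le> ennreal (2 / e + 1)"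
proof -
  define f where "f x = ennreal (\<bar>x\<bar> powr (e - 1)) * indicator {-1..1} x" for x :: real
  have [measurable]: "f \<in> borel_measurable borel"
    unfolding f_def by measurable
  have "(\<integral>\<^sup>+t. ennreal (\<bar>t - t0\<bar> powr (e - 1)) * indicator {0..1} t \<partial>lborel)
      \<le> (\<integral>\<^sup>+t. f (t - t0) + indicator {0..1} t \<partial>lborel)"
  proof (rule nn_integral_mono)
    fix t :: real
    have "\<bar>t - t0\<bar> powr (e - 1) \<le> 1" if "1 < \<bar>t - t0\<bar>"
      using assms that powr_less_one[of "\<bar>t - t0\<bar>" "e - 1"] by auto
    then show "ennreal (\<bar>t - t0\<bar> powr (e - 1)) * indicator {0..1} t \<le> f (t - t0) + indicator {0..1} t"
      by (cases "\<bar>t - t0\<bar> \<le> 1") (auto simp: f_def indicator_def)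
  qed
  also have "\<dots> = (\<integral>\<^sup>+t. f (t - t0) \<partial>lborel) + 1"
    by (subst nn_integral_add) simp_all
  also have "(\<integral>\<^sup>+t. f (t - t0) \<partial>lborel) = (\<integral>\<^sup>+t. f t \<partial>lborel)"
    using nn_integral_real_affine[of f 1 "-t0"] by simp
  also have "\<dots> \<le> ennreal (2 / e)"
    unfolding f_def by (rule nn_integral_abs_powr_symmetric_interval[OF assms(1)])
  finally show ?thesis
    using assms ennreal_plus[of "2 / e" 1] by simp
qed

lemma norm_add_of_real_mult_ge:
  fixes u v :: complex
  shows "norm v * \<bar>t + Re (u / v)\<bar> \<le> norm (u + of_real t * v)"
proof (cases "v = 0")
  case False
  have "norm v * \<bar>t + Re (u / v)\<bar> \<le> norm v * norm (u / v + of_real t)"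
    using abs_Re_le_cmod[of "u / v + of_real t"] by (intro mult_left_mono) (auto simp: add.commute)
  also have "\<dots> = norm (u + of_real t * v)"
    using False by (simp add: norm_mult[symmetric] algebra_simps)
  finally show ?thesis .
qed simp

lemma segments_holder_cone:
  assumes g: "0 < g" "g < 1"
  shows "segments_holder 3 g (\<lambda>w. cone_density g (w - b))"
  unfolding segments_holder_def
proof (intro allI)
  fix x y :: complex
  define u v where "u = x - b" and "v = y - x"
  \<comment> \<open>the parameter of the point of the line through x and y nearest to b\<close>
  define t0 where "t0 = - Re (u / v)"
  have pw: "ennreal (sqrt (cone_density g (linepath x y t - b)) * norm (y - x))
      \<le> ennreal (g * norm v powr g) * ennreal (\<bar>t - t0\<bar> powr (g - 1))" if "t \<noteq> t0" for t
  proof (cases "v = 0")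
    case False
    have "norm v * \<bar>t - t0\<bar> \<le> norm (linepath x y t - b)"
      using norm_add_of_real_mult_ge[of v t u]
      by (simp add: t0_def linepath_def u_def v_def scaleR_conv_of_real algebra_simps)
    then have "norm (linepath x y t - b) powr (g - 1) \<le> (norm v * \<bar>t - t0\<bar>) powr (g - 1)"
      using that False g by (intro powr_mono2') auto
    then have "g * norm (linepath x y t - b) powr (g - 1) * norm v
        \<le> g * (norm v powr (g - 1) * \<bar>t - t0\<bar> powr (g - 1)) * norm v"
      using g by (intro mult_right_mono mult_left_mono) (auto simp: powr_mult)
    also have "\<dots> = g * norm v powr g * \<bar>t - t0\<bar> powr (g - 1)"
      using False by (simp add: powr_mult_base mult_ac)
    finally show ?thesis
      using g by (simp add: sqrt_cone_density v_def ennreal_mult[symmetric] ennreal_leI)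
  qed (simp add: v_def)
  have "conf_length (\<lambda>w. cone_density g (w - b)) (linepath x y)
      \<le> (\<integral>\<^sup>+t. ennreal (g * norm v powr g) * (ennreal (\<bar>t - t0\<bar> powr (g - 1)) * indicator {0..1} t) \<partial>lborel)"
    unfolding conf_length_def
    by (rule nn_integral_mono_AE)
       (use AE_lborel_singleton[of t0] in \<open>eventually_elim, use pw in \<open>auto simp: indicator_def\<close>\<close>)
  also have "\<dots> = ennreal (g * norm v powr g) *
      (\<integral>\<^sup>+t. ennreal (\<bar>t - t0\<bar> powr (g - 1)) * indicator {0..1} t \<partial>lborel)"
    by (rule nn_integral_cmult) measurable
  also have "\<dots> \<le> ennreal (g * norm v powr g) * ennreal (2 / g + 1)"
    by (intro mult_left_mono nn_integral_shifted_abs_powr_le g) simp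
  also have "\<dots> = ennreal (g * norm v powr g * (2 / g + 1))"
    using g by (subst ennreal_mult) auto
  also have "g * norm v powr g * (2 / g + 1) = (2 + g) * norm v powr g"
    using g by (simp add: field_simps)
  also have "\<dots> \<le> ennreal (3 * norm (y - x) powr g)"
    unfolding v_def using g by (intro ennreal_leI mult_right_mono) auto
  finally show "conf_length (\<lambda>w. cone_density g (w - b)) (linepath x y) \<le> ennreal (3 * norm (y - x) powr g)" .
qed

lemma segments_holder_cone_density:
  assumes "0 < g" "g < 1"
  shows "segments_holder 6 g (cone_density g)"
proof (rule segments_holder_mono)
  show "segments_holder 3 g (cone_density g)"
    using segments_holder_cone[OF assms, of 0] by simp
qed simp

lemma sqrt_omegaF_density:
  assumes "0 < b2 + b3 - 1"
  shows "sqrt (omegaF_density b2 b3 a2 a3 m w) =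
    (b2 + b3 - 1) * norm (w - m * a2) powr (b2 - 1) * norm (w - m * a3) powr (b3 - 1)"
proof -
  have "sqrt (x powr (2 * b - 2)) = x powr (b - 1)" if "x \<ge> 0" for x b :: real
    by (simp add: powr_half_sqrt[symmetric] powr_powr algebra_simps)
  then show ?thesis
    using assms by (simp add: omegaF_density_def real_sqrt_mult)
qed

lemma powr_mult_powr_le_add:
  fixes X Y e2 e3 :: real
  assumes "X \<ge> 0" "Y \<ge> 0" "e2 \<le> 0" "e3 \<le> 0"
  shows "X powr e2 * Y powr e3 \<le> X powr (e2 + e3) + Y powr (e2 + e3)"
proof (cases "X = 0 \<or> Y = 0")
  case False
  then have "X > 0" "Y > 0"
    using assms by auto
  then have "X powr e2 * Y powr e3 \<le> (if X \<le> Y then X powr e2 * X powr e3 else Y powr e2 * Y powr e3)"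
    using assms by (auto intro!: mult_left_mono mult_right_mono powr_mono2')
  then show ?thesis
    by (auto simp: powr_add[symmetric] split: if_splits intro: add_increasing add_increasing2)
qed auto

lemma segments_holder_omegaF:
  assumes "0 < b2 + b3 - 1" "b2 < 1" "b3 < 1"
  shows "segments_holder 6 (b2 + b3 - 1) (omegaF_density b2 b3 a2 a3 m)"
proof -
  let ?g = "b2 + b3 - 1"
  have "sqrt (omegaF_density b2 b3 a2 a3 m w) \<le>
      sqrt (cone_density ?g (w - m * a2)) + sqrt (cone_density ?g (w - m * a3))" for w
  proof -
    have "norm (w - m * a2) powr (b2 - 1) * norm (w - m * a3) powr (b3 - 1)
        \<le> norm (w - m * a2) powr (?g - 1) + norm (w - m * a3) powr (?g - 1)"
      using powr_mult_powr_le_add[of "norm (w - m * a2)" "norm (w - m * a3)" "b2 - 1" "b3 - 1"] assms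
      by (simp add: algebra_simps)
    then have "?g * (norm (w - m * a2) powr (b2 - 1) * norm (w - m * a3) powr (b3 - 1))
        \<le> ?g * (norm (w - m * a2) powr (?g - 1) + norm (w - m * a3) powr (?g - 1))"
      using assms(1) by (rule mult_left_mono[OF _ less_imp_le])
    then show ?thesis
      using assms by (simp add: sqrt_omegaF_density sqrt_cone_density mult.assoc distrib_left)
  qed
  then have "segments_holder (3 + 3) ?g (omegaF_density b2 b3 a2 a3 m)"
    using assms
    by (intro segments_holder_add[where rho_a = "\<lambda>w. cone_density ?g (w - m * a2)"
          and rho_b = "\<lambda>w. cone_density ?g (w - m * a3)"] segments_holder_cone)
       (auto simp: cone_density_def)
  then show ?thesis
    by simp
qed

lemma norm_diff_powr_le:
  fixes w b :: "'a::real_normed_vector" and B e :: real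
  assumes b: "norm b \<le> B" and w: "2 * B \<le> norm w" and B: "0 < B" and e: "-1 \<le> e" "e \<le> 0"
  shows "norm (w - b) powr e \<le> norm w powr e * (1 + 2 * (B / norm w))"
proof -
  define t where "t = B / norm w"
  have nw: "0 < norm w"
    using w B by linarith
  then have t: "0 < t" "t \<le> 1/2"
    using B w by (auto simp: t_def field_simps)
  have "norm w * (1 - t) \<le> norm (w - b)"
    using norm_triangle_ineq2[of w b] b nw by (simp add: t_def algebra_simps)
  then have "norm (w - b) powr e \<le> (norm w * (1 - t)) powr e"
    using e nw t by (intro powr_mono2') auto
  also have "\<dots> = norm w powr e * (1 - t) powr e"
    using nw t by (simp add: powr_mult)
  also have "(1 - t) powr e \<le> (1 - t) powr (-1)"
    by (rule powr_mono') (use e t in auto)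
  also have "(1 - t) powr (-1) = 1 / (1 - t)"
    using t by (intro powr_neg_one) auto
  also have "1 / (1 - t) \<le> 1 + 2 * t"
    using t mult_left_mono[of t "1/2" t] by (simp add: divide_le_eq algebra_simps)
  finally show ?thesis
    using nw by (simp add: t_def mult_left_mono)
qed

lemma norm_powr_le_norm_diff_powr:
  fixes w b :: "'a::real_normed_vector" and B e :: real
  assumes b: "norm b \<le> B" and w: "2 * B \<le> norm w" and B: "0 < B" and e: "-1 \<le> e" "e \<le> 0"
  shows "norm w powr e \<le> norm (w - b) powr e * (1 + 2 * (B / norm w))"
proof -
  define t where "t = B / norm w"
  have nw: "0 < norm w"
    using w B by linarith
  then have t: "0 < t" "t \<le> 1/2"
    using B w by (auto simp: t_def field_simps)
  have "norm (w - b) \<le> norm w * (1 + t)"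
    using norm_triangle_ineq4[of w b] b nw by (simp add: t_def algebra_simps)
  moreover have "0 < norm (w - b)"
    using norm_triangle_ineq2[of w b] b w B by linarith
  ultimately have le: "(norm w * (1 + t)) powr e \<le> norm (w - b) powr e"
    using e by (intro powr_mono2') auto
  have "norm w powr e / (1 + t) = norm w powr e * (1 + t) powr (-1)"
    using t by (simp add: powr_neg_one)
  also have "\<dots> \<le> norm w powr e * (1 + t) powr e"
    by (intro mult_left_mono powr_mono) (use e t in auto)
  also have "\<dots> = (norm w * (1 + t)) powr e"
    using nw t by (simp add: powr_mult)
  finally have "norm w powr e / (1 + t) \<le> norm (w - b) powr e"
    using le by linarith
  then have "norm w powr e \<le> norm (w - b) powr e * (1 + t)"
    using t by (simp add: divide_le_eq)
  also have "\<dots> \<le> norm (w - b) powr e * (1 + 2 * t)"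
    using t by (intro mult_left_mono) auto
  finally show ?thesis
    by (simp add: t_def)
qed

lemma mult_le_mult_one_plus:
  fixes x y x' y' t :: real
  assumes "0 \<le> x" "x \<le> x' * (1 + 2 * t)" "0 \<le> y" "y \<le> y' * (1 + 2 * t)" "0 \<le> t" "t \<le> 1/2"
  shows "x * y \<le> x' * y' * (1 + 6 * t)"
proof -
  have "x * y \<le> (x' * (1 + 2 * t)) * (y' * (1 + 2 * t))"
    using assms by (intro mult_mono) auto
  also have "\<dots> = x' * y' * (1 + 2 * t)^2"
    by (simp add: power2_eq_square mult_ac)
  also have "\<dots> \<le> x' * y' * (1 + 6 * t)"
  proof (rule mult_left_mono)
    show "(1 + 2 * t)^2 \<le> 1 + 6 * t"
      using mult_left_mono[of t "1/2" t] assms(5,6) by (simp add: power2_eq_square algebra_simps)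
    show "0 \<le> x' * y'"
      using assms by (smt (verit) mult_nonneg_nonneg zero_le_mult_iff)
  qed
  finally show ?thesis .
qed

lemma sqrt_omegaF_cone_ratio:
  fixes b2 b3 :: real and a2 a3 m w :: complex and A :: real
  assumes bet: "0 < b2" "b2 < 1" "0 < b3" "b3 < 1" "0 < b2 + b3 - 1"
    and A: "norm a2 \<le> A" "norm a3 \<le> A" "0 < A" and m: "0 < norm m"
    and w: "2 * A * norm m \<le> norm w"
  shows "sqrt (omegaF_density b2 b3 a2 a3 m w)
           \<le> sqrt (cone_density (b2 + b3 - 1) w) * (1 + 3 * (2 * A * norm m) / norm w)"
    and "sqrt (cone_density (b2 + b3 - 1) w)
           \<le> sqrt (omegaF_density b2 b3 a2 a3 m w) * (1 + 3 * (2 * A * norm m) / norm w)"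
proof -
  define B where "B = A * norm m"
  define t where "t = B / norm w"
  have B: "B > 0" and w': "2 * B \<le> norm w"
    using A m w by (simp_all add: B_def)
  then have "0 < norm w"
    by linarith
  with B w' have t: "0 < t" "t \<le> 1/2"
    by (auto simp: t_def field_simps)
  have e6: "3 * (2 * A * norm m) / norm w = 6 * t"
    by (simp add: t_def B_def)
  have "norm (m * a2) \<le> B" "norm (m * a3) \<le> B"
    using A m by (auto simp: B_def norm_mult mult_left_mono mult.commute)
  note r2 = norm_diff_powr_le[OF this(1) w' B, of "b2 - 1", folded t_def]
      norm_powr_le_norm_diff_powr[OF this(1) w' B, of "b2 - 1", folded t_def]
   and r3 = norm_diff_powr_le[OF this(2) w' B, of "b3 - 1", folded t_def]
      norm_powr_le_norm_diff_powr[OF this(2) w' B, of "b3 - 1", folded t_def]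
  let ?g = "b2 + b3 - 1"
  have sc: "sqrt (cone_density ?g w) = ?g * (norm w powr (b2 - 1) * norm w powr (b3 - 1))"
    using bet by (simp add: sqrt_cone_density powr_add[symmetric])
  have sF: "sqrt (omegaF_density b2 b3 a2 a3 m w) = ?g * (norm (w - m * a2) powr (b2 - 1) * norm (w - m * a3) powr (b3 - 1))"
    using bet by (simp add: sqrt_omegaF_density mult.assoc)
  have "norm (w - m * a2) powr (b2 - 1) * norm (w - m * a3) powr (b3 - 1)
      \<le> norm w powr (b2 - 1) * norm w powr (b3 - 1) * (1 + 6 * t)"
    by (rule mult_le_mult_one_plus) (use r2(1) r3(1) t bet in auto)
  then show "sqrt (omegaF_density b2 b3 a2 a3 m w) \<le> sqrt (cone_density ?g w) * (1 + 3 * (2 * A * norm m) / norm w)"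
    using bet unfolding sc sF e6 by (simp add: mult.assoc)
  have "norm w powr (b2 - 1) * norm w powr (b3 - 1)
      \<le> norm (w - m * a2) powr (b2 - 1) * norm (w - m * a3) powr (b3 - 1) * (1 + 6 * t)"
    by (rule mult_le_mult_one_plus) (use r2(2) r3(2) t bet in auto)
  then show "sqrt (cone_density ?g w) \<le> sqrt (omegaF_density b2 b3 a2 a3 m w) * (1 + 3 * (2 * A * norm m) / norm w)"
    using bet unfolding sc sF e6 by (simp add: mult.assoc)
qed

lemma abs_enn2real_diff_le:
  fixes x y :: ennreal and k :: real
  assumes "x < \<infinity>" "y < \<infinity>" "0 \<le> k" "x \<le> y + ennreal k" "y \<le> x + ennreal k"
  shows "\<bar>enn2real x - enn2real y\<bar> \<le> k"
proof -
  obtain a where a: "x = ennreal a" "0 \<le> a"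
    using assms(1) ennreal_cases[of x] by auto
  obtain b where b: "y = ennreal b" "0 \<le> b"
    using assms(2) ennreal_cases[of y] by auto
  have "a \<le> b + k" "b \<le> a + k"
    using assms(3-5) a b by (simp_all flip: ennreal_plus)
  then show ?thesis
    using a b by simp
qed

lemma conf_dist_omegaF_cone_estimate:
  fixes b2 b3 A :: real and a2 a3 m :: complex
  defines "g \<equiv> b2 + b3 - 1"
  assumes bet: "0 < b2" "b2 < 1" "0 < b3" "b3 < 1" "0 < g"
    and A: "norm a2 \<le> A" "norm a3 \<le> A" "0 < A" and m: "0 < norm m"
  shows "conf_dist (omegaF_density b2 b3 a2 a3 m) p q < \<infinity>"
    and "conf_dist (cone_density g) p q < \<infinity>"
    and "\<bar>enn2real (conf_dist (omegaF_density b2 b3 a2 a3 m) p q) - enn2real (conf_dist (cone_density g) p q)\<bar>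
           \<le> comparison_const 6 3 g * (2 * A) powr g * norm m powr g"
proof -
  let ?F = "omegaF_density b2 b3 a2 a3 m" and ?C = "cone_density g"
  let ?K = "comparison_const 6 3 g * (2 * A * norm m) powr g"
  have g: "0 < g" "g < 1"
    using bet by (auto simp: g_def)
  have r: "0 < 2 * A * norm m"
    using A m by simp
  have [measurable]: "?F \<in> borel_measurable borel" "?C \<in> borel_measurable borel"
    unfolding omegaF_density_def cone_density_def by measurable
  have nonneg: "0 \<le> ?F w" "0 \<le> ?C w" for w
    by (simp_all add: omegaF_density_def cone_density_def)
  have segF: "segments_holder 6 g ?F"
    unfolding g_def using bet by (intro segments_holder_omegaF) (auto simp: g_def)
  have segC: "segments_holder 6 g ?C"
    by (rule segments_holder_cone_density[OF g])
  show fin: "conf_dist ?F p q < \<infinity>" "conf_dist ?C p q < \<infinity>"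
    using conf_dist_le_segment[OF segF, of p q] conf_dist_le_segment[OF segC, of p q]
    by (auto simp: order_le_less_trans)
  note ratio = sqrt_omegaF_cone_ratio[OF bet[unfolded g_def] A m, folded g_def]
  have "conf_dist ?F p q \<le> conf_dist ?C p q + ennreal ?K"
    by (rule conf_dist_le_conf_dist_add[OF _ nonneg(2) _ g r _ _ ratio(1) segC segF]) simp_all
  moreover have "conf_dist ?C p q \<le> conf_dist ?F p q + ennreal ?K"
    by (rule conf_dist_le_conf_dist_add[OF _ nonneg(1) _ g r _ _ ratio(2) segF segC]) simp_all
  moreover have "2 powr g / 2 < 1"
    using g powr_less_mono[of g 1 2] by simp
  ultimately have "\<bar>enn2real (conf_dist ?F p q) - enn2real (conf_dist ?C p q)\<bar> \<le> ?K"
    using r by (intro abs_enn2real_diff_le fin) (simp_all add: comparison_const_def)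
  then show "\<bar>enn2real (conf_dist ?F p q) - enn2real (conf_dist ?C p q)\<bar>
      \<le> comparison_const 6 3 g * (2 * A) powr g * norm m powr g"
    using A by (simp add: powr_mult mult.assoc)
qed

theorem lemma3p8:
  fixes \<beta>2 \<beta>3 :: real and a2 a3 :: complex and K :: "complex set"
  assumes "0 < \<beta>2" "\<beta>2 < 1" "0 < \<beta>3" "\<beta>3 < 1"
    and "\<beta>2 + \<beta>3 - 1 > 0"
    and "a2 \<noteq> a3"
    and "compact K"
  shows "\<exists>C>0. \<forall>p\<in>K. \<forall>q\<in>K. \<forall>\<mu>::complex. 0 < norm \<mu> \<and> norm \<mu> < 1 \<longrightarrow>
           conf_dist (omegaF_density \<beta>2 \<beta>3 a2 a3 \<mu>) p q < \<infinity> \<and>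
           conf_dist (cone_density (\<beta>2 + \<beta>3 - 1)) p q < \<infinity> \<and>
           \<bar>enn2real (conf_dist (omegaF_density \<beta>2 \<beta>3 a2 a3 \<mu>) p q)
             - enn2real (conf_dist (cone_density (\<beta>2 + \<beta>3 - 1)) p q)\<bar>
             \<le> C * norm \<mu> powr (\<beta>2 + \<beta>3 - 1)"
proof -
  let ?\<gamma> = "\<beta>2 + \<beta>3 - 1"
  define A where "A = max (norm a2) (norm a3) + 1"
  define C where "C = comparison_const 6 3 ?\<gamma> * (2 * A) powr ?\<gamma>"
  have A: "norm a2 \<le> A" "norm a3 \<le> A" "0 < A"
    unfolding A_def using max.cobounded1[of "norm a2" "norm a3"] max.cobounded2[of "norm a2" "norm a3"]
      norm_ge_zero[of a2] by linarith+
  note estimate = conf_dist_omegaF_cone_estimate[OF assms(1-5) A, folded C_def]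
  show ?thesis
  proof (intro exI[of _ "\<bar>C\<bar> + 1"] conjI ballI allI impI estimate)
    fix p q \<mu> :: complex
    assume "0 < norm \<mu> \<and> norm \<mu> < 1"
    then have "\<bar>enn2real (conf_dist (omegaF_density \<beta>2 \<beta>3 a2 a3 \<mu>) p q)
        - enn2real (conf_dist (cone_density ?\<gamma>) p q)\<bar> \<le> C * norm \<mu> powr ?\<gamma>"
      using estimate(3) by blast
    also have "\<dots> \<le> (\<bar>C\<bar> + 1) * norm \<mu> powr ?\<gamma>"
      by (intro mult_right_mono) auto
    finally show "\<bar>enn2real (conf_dist (omegaF_density \<beta>2 \<beta>3 a2 a3 \<mu>) p q)
        - enn2real (conf_dist (cone_density ?\<gamma>) p q)\<bar> \<le> (\<bar>C\<bar> + 1) * norm \<mu> powr ?\<gamma>" .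
  qed auto
qed

end
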